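(* Let $(X,d)$ be a metric space, $F$ a semiflow on $X$, $\varepsilon>0$, $x\in X$, and let $\gamma:[0,T]\to X$ be an $\varepsilon$-chain from $x$ to $x$. Then there exists $\tau_*>0$ such that for every $T'\in(T-\tau_*,T)$ with $T'\ge1$ there is a $4\varepsilon$-chain $\gamma':[0,T']\to X$ from $x$ to $x$.
   Context: A semiflow on a metric space $(X,d)$ is a continuous map $F:[0,\infty)\times X\to X$, $(t,x)\mapsto F^t(x)$, with $F^0=\mathrm{id}$ and $F^{t+s}=F^t\circ F^s$ for all $t,s\ge0$. A curve is piecewise continuous if it is continuous except at finitely many points, at which one-sided limits exist. For $T\ge1$, a piecewise continuous curve $\gamma:[0,T]\to X$ is $\varepsilon$-close to $F$ if $d(\gamma(t+\tau),F^\tau(\gamma(t)))<\varepsilon$ for every $\tau\in[0,1]$ and $t\in[0,T-\tau]$. An $\varepsilon$-chain from $x$ to $y$ is a piecewise continuous $\gamma:[0,T]\to X$, $T\ge 1$, with $\gamma(0)=x$, $\gamma(T)=y$, and $\gamma$ $\varepsilon$-close to $F$. *)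

theory Defs
  imports "HOL-Analysis.Analysis"
begin

text \<open>A semiflow on a metric space: a jointly continuous map
  F : [0,inf) x X -> X with F 0 = id and F (t+s) = F t o F s for t, s >= 0.
  Values of F at negative times are irrelevant.\<close>
definition semiflow :: "(real \<Rightarrow> 'a::metric_space \<Rightarrow> 'a) \<Rightarrow> bool" where
  "semiflow F \<longleftrightarrow>
     continuous_on ({0..} \<times> UNIV) (\<lambda>(t, x). F t x) \<and>
     F 0 = id \<and>
     (\<forall>t s. 0 \<le> t \<longrightarrow> 0 \<le> s \<longrightarrow> F (t + s) = F t \<circ> F s)"

definition piecewise_continuous_on :: "real \<Rightarrow> real \<Rightarrow> (real \<Rightarrow> 'a::metric_space) \<Rightarrow> bool" where
  "piecewise_continuous_on a b \<gamma> \<longleftrightarrow>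
     (\<exists>S. finite S \<and> S \<subseteq> {a..b} \<and>
        (\<forall>t\<in>{a..b} - S. continuous (at t within {a..b}) \<gamma>) \<and>
        (\<forall>t\<in>S. (a < t \<longrightarrow> (\<exists>l. (\<gamma> \<longlongrightarrow> l) (at_left t))) \<and>
                (t < b \<longrightarrow> (\<exists>l. (\<gamma> \<longlongrightarrow> l) (at_right t)))))"

definition eps_close :: "real \<Rightarrow> (real \<Rightarrow> 'a::metric_space \<Rightarrow> 'a) \<Rightarrow> real \<Rightarrow> (real \<Rightarrow> 'a) \<Rightarrow> bool" where
  "eps_close \<epsilon> F T \<gamma> \<longleftrightarrow>
     (\<forall>\<tau>\<in>{0..1}. \<forall>t\<in>{0..T - \<tau>}. dist (\<gamma> (t + \<tau>)) (F \<tau> (\<gamma> t)) < \<epsilon>)"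

definition eps_chain :: "real \<Rightarrow> (real \<Rightarrow> 'a::metric_space \<Rightarrow> 'a) \<Rightarrow> 'a \<Rightarrow> 'a \<Rightarrow> real \<Rightarrow> (real \<Rightarrow> 'a) \<Rightarrow> bool" where
  "eps_chain \<epsilon> F x y T \<gamma> \<longleftrightarrow>
     1 \<le> T \<and> piecewise_continuous_on 0 T \<gamma> \<and> \<gamma> 0 = x \<and> \<gamma> T = y \<and> eps_close \<epsilon> F T \<gamma>"

end

theory Submission
  imports Defs
begin

text \<open>Near its endpoint the chain stays within \<open>2\<epsilon>\<close> of \<open>x = \<gamma> T\<close>: indeed \<open>\<gamma> T\<close> is
  \<open>\<epsilon>\<close>-close to \<open>F (T - s) (\<gamma> s)\<close>, and by continuity of the semiflow and \<open>F 0 = id\<close>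
  the latter has the same left limit at \<open>T\<close> as \<open>\<gamma> s\<close>. Cutting \<open>\<gamma>\<close> off at any \<open>T'\<close>
  close to \<open>T\<close> and resetting its value at \<open>T'\<close> to \<open>x\<close> therefore gives a \<open>3\<epsilon>\<close>-chain.\<close>

lemma piecewise_continuous_on_left_limit:
  fixes \<gamma> :: "real \<Rightarrow> 'a::metric_space"
  assumes "piecewise_continuous_on a b \<gamma>" "a < c" "c \<le> b"
  shows "\<exists>l. (\<gamma> \<longlongrightarrow> l) (at_left c)"
proof -
  obtain S where S: "finite S" "S \<subseteq> {a..b}"
    "\<forall>t\<in>{a..b} - S. continuous (at t within {a..b}) \<gamma>"
    "\<forall>t\<in>S. (a < t \<longrightarrow> (\<exists>l. (\<gamma> \<longlongrightarrow> l) (at_left t))) \<and>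
                (t < b \<longrightarrow> (\<exists>l. (\<gamma> \<longlongrightarrow> l) (at_right t)))"
    using assms(1) unfolding piecewise_continuous_on_def by blast
  show ?thesis
  proof (cases "c \<in> S")
    case True
    then show ?thesis using S(4) assms by blast
  next
    case False
    then have "(\<gamma> \<longlongrightarrow> \<gamma> c) (at c within {a..b})"
      using S(3) assms by (auto simp: continuous_within)
    then have "(\<gamma> \<longlongrightarrow> \<gamma> c) (at c within {a..c})"
      by (rule tendsto_within_subset) (use assms in auto)
    then show ?thesis using assms(2) at_within_Icc_at_left by metis
  qed
qed

lemma piecewise_continuous_on_restrict_fun_upd:
  fixes \<gamma> :: "real \<Rightarrow> 'a::metric_space"
  assumes pc: "piecewise_continuous_on a b \<gamma>" and "c \<le> b"
  shows "piecewise_continuous_on a c (\<gamma>(c := y))"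
proof -
  obtain S where S: "finite S" "S \<subseteq> {a..b}"
    "\<forall>t\<in>{a..b} - S. continuous (at t within {a..b}) \<gamma>"
    "\<forall>t\<in>S. (a < t \<longrightarrow> (\<exists>l. (\<gamma> \<longlongrightarrow> l) (at_left t))) \<and>
                (t < b \<longrightarrow> (\<exists>l. (\<gamma> \<longlongrightarrow> l) (at_right t)))"
    using pc unfolding piecewise_continuous_on_def by blast
  let ?S = "insert c S \<inter> {a..c}"
  have continuous: "continuous (at t within {a..c}) (\<gamma>(c := y))" if t: "t \<in> {a..c} - ?S" for t
  proof -
    have "continuous (at t within {a..b}) \<gamma>"
      using S(3) t \<open>c \<le> b\<close> by auto
    then have "(\<gamma> \<longlongrightarrow> \<gamma> t) (at t within {a..c})"
      unfolding continuous_within by (rule tendsto_within_subset) (use \<open>c \<le> b\<close> in auto)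
    then have "(\<gamma>(c := y) \<longlongrightarrow> \<gamma> t) (at t within {a..c})"
      by (rule Lim_transform_within[where d="c - t"]) (use t in \<open>auto simp: dist_real_def\<close>)
    then show ?thesis
      using t unfolding continuous_within by auto
  qed
  have left: "\<exists>l. (\<gamma>(c := y) \<longlongrightarrow> l) (at_left t)" if t: "t \<in> ?S" "a < t" for t
  proof -
    have "t \<le> b" using t \<open>c \<le> b\<close> by auto
    then obtain l where "(\<gamma> \<longlongrightarrow> l) (at_left t)"
      using piecewise_continuous_on_left_limit[OF pc \<open>a < t\<close>] by blast
    moreover have "\<forall>\<^sub>F s in at_left t. \<gamma> s = (\<gamma>(c := y)) s"
      unfolding eventually_at_left_field using t by (intro exI[of _ a]) auto
    ultimately show ?thesis using Lim_transform_eventually by blast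
  qed
  have right: "\<exists>l. (\<gamma>(c := y) \<longlongrightarrow> l) (at_right t)" if t: "t \<in> ?S" "t < c" for t
  proof -
    obtain l where "(\<gamma> \<longlongrightarrow> l) (at_right t)"
      using S(4) t \<open>c \<le> b\<close> by auto
    moreover have "\<forall>\<^sub>F s in at_right t. \<gamma> s = (\<gamma>(c := y)) s"
      unfolding eventually_at_right_field using t by (intro exI[of _ c]) auto
    ultimately show ?thesis using Lim_transform_eventually by blast
  qed
  show ?thesis
    unfolding piecewise_continuous_on_def
    using S(1) by (intro exI[of _ ?S] conjI ballI impI continuous left right) auto
qed

lemma eps_close_mono:
  assumes "eps_close \<epsilon> F T \<gamma>" "\<epsilon> \<le> \<delta>"
  shows "eps_close \<delta> F T \<gamma>"
  using assms unfolding eps_close_def by (meson less_le_trans)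

lemma eps_close_restrict_fun_upd:
  assumes close: "eps_close \<epsilon> F T \<gamma>" and "0 < \<epsilon>" "T' \<le> T" "F 0 = id"
  shows "eps_close (\<epsilon> + dist (\<gamma> T') y) F T' (\<gamma>(T' := y))"
  unfolding eps_close_def
proof (intro ballI)
  fix \<tau> t assume \<tau>: "\<tau> \<in> {0..1}" and t: "t \<in> {0..T' - \<tau>}"
  have step: "dist (\<gamma> (t + \<tau>)) (F \<tau> (\<gamma> t)) < \<epsilon>"
    using close \<tau> t \<open>T' \<le> T\<close> unfolding eps_close_def by auto
  consider "t + \<tau> \<noteq> T'" "t \<noteq> T'" | "t = T'" "\<tau> = 0" | "t + \<tau> = T'" "t \<noteq> T'"
    using \<tau> t by fastforce
  then show "dist ((\<gamma>(T' := y)) (t + \<tau>)) (F \<tau> ((\<gamma>(T' := y)) t)) < \<epsilon> + dist (\<gamma> T') y"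
  proof cases
    case 1
    have "dist (\<gamma> (t + \<tau>)) (F \<tau> (\<gamma> t)) < \<epsilon> + dist (\<gamma> T') y"
      using step zero_le_dist[of "\<gamma> T'" y] by linarith
    with 1 show ?thesis by simp
  next
    case 2
    then show ?thesis using \<open>0 < \<epsilon>\<close> \<open>F 0 = id\<close> by (simp add: add_pos_nonneg)
  next
    case 3
    have "dist y (F \<tau> (\<gamma> t)) \<le> dist y (\<gamma> T') + dist (\<gamma> T') (F \<tau> (\<gamma> t))"
      by (rule dist_triangle)
    also have "\<dots> < \<epsilon> + dist (\<gamma> T') y"
      using step 3 by (simp add: dist_commute)
    finally show ?thesis using 3 by simp
  qed
qed

lemma semiflow_tendsto_at_left:
  assumes "semiflow F" and lim: "(\<gamma> \<longlongrightarrow> l) (at_left T)"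
  shows "((\<lambda>s. F (T - s) (\<gamma> s)) \<longlongrightarrow> l) (at_left T)"
proof -
  have cont: "continuous_on ({0..} \<times> UNIV) (\<lambda>(t, x). F t x)" and "F 0 = id"
    using assms(1) unfolding semiflow_def by auto
  have "((\<lambda>s. (T - s, \<gamma> s)) \<longlongrightarrow> (0, l)) (at_left T)"
    by (intro tendsto_Pair lim) (auto intro!: tendsto_eq_intros simp: at_left_eq)
  moreover have "\<forall>\<^sub>F s in at_left T. (T - s, \<gamma> s) \<in> {0..} \<times> UNIV"
    unfolding eventually_at_left_field by (intro exI[of _ "T - 1"]) auto
  ultimately have "((\<lambda>s. (\<lambda>(t, x). F t x) (T - s, \<gamma> s)) \<longlongrightarrow> (\<lambda>(t, x). F t x) (0, l)) (at_left T)"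
    by (intro continuous_on_tendsto_compose[OF cont]) auto
  then show ?thesis using \<open>F 0 = id\<close> by simp
qed

lemma eps_chain_eventually_near_endpoint:
  assumes "semiflow F" "0 < \<epsilon>" and chain: "eps_chain \<epsilon> F x y T \<gamma>"
  shows "\<forall>\<^sub>F s in at_left T. dist (\<gamma> s) y < 2 * \<epsilon>"
proof -
  have "1 \<le> T" and "\<gamma> T = y" and close: "eps_close \<epsilon> F T \<gamma>"
    and pc: "piecewise_continuous_on 0 T \<gamma>"
    using chain unfolding eps_chain_def by auto
  obtain l where l: "(\<gamma> \<longlongrightarrow> l) (at_left T)"
    using piecewise_continuous_on_left_limit[OF pc, of T] \<open>1 \<le> T\<close> by auto
  have "((\<lambda>s. dist (F (T - s) (\<gamma> s)) (\<gamma> s)) \<longlongrightarrow> dist l l) (at_left T)"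
    by (intro tendsto_dist semiflow_tendsto_at_left[OF \<open>semiflow F\<close> l] l)
  then have "\<forall>\<^sub>F s in at_left T. dist (F (T - s) (\<gamma> s)) (\<gamma> s) < \<epsilon>"
    using \<open>0 < \<epsilon>\<close> by (auto dest: order_tendstoD(2))
  moreover have "\<forall>\<^sub>F s in at_left T. max 0 (T - 1) < s \<and> s < T"
    unfolding eventually_at_left_field using \<open>1 \<le> T\<close> by (intro exI[of _ "max 0 (T - 1)"]) auto
  ultimately show ?thesis
  proof eventually_elim
    case (elim s)
    then have "T - s \<in> {0..1}" "s \<in> {0..T - (T - s)}" by auto
    then have "dist (\<gamma> (s + (T - s))) (F (T - s) (\<gamma> s)) < \<epsilon>"
      using close unfolding eps_close_def by blast
    then have "dist y (F (T - s) (\<gamma> s)) < \<epsilon>" using \<open>\<gamma> T = y\<close> by simp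
    then show ?case using elim(1) dist_triangle3[of "\<gamma> s" y "F (T - s) (\<gamma> s)"]
      by (simp add: dist_commute)
  qed
qed

theorem lemma3p4:
  fixes F :: "real \<Rightarrow> 'a::metric_space \<Rightarrow> 'a" and x :: 'a and \<gamma> :: "real \<Rightarrow> 'a"
  assumes "semiflow F" and "\<epsilon> > 0" and "eps_chain \<epsilon> F x x T \<gamma>"
  shows "\<exists>\<tau>\<^sub>s>0. \<forall>T'. T - \<tau>\<^sub>s < T' \<and> T' < T \<and> 1 \<le> T' \<longrightarrow>
           (\<exists>\<gamma>'. eps_chain (4 * \<epsilon>) F x x T' \<gamma>')"
proof -
  have pc: "piecewise_continuous_on 0 T \<gamma>" and "\<gamma> 0 = x" and close: "eps_close \<epsilon> F T \<gamma>"
    using assms(3) unfolding eps_chain_def by auto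
  have "F 0 = id" using assms(1) unfolding semiflow_def by auto
  obtain b where "b < T" and near: "\<And>s. b < s \<Longrightarrow> s < T \<Longrightarrow> dist (\<gamma> s) x < 2 * \<epsilon>"
    using eps_chain_eventually_near_endpoint[OF assms]
    unfolding eventually_at_left_field by blast
  have "eps_chain (4 * \<epsilon>) F x x T' (\<gamma>(T' := x))" if T': "b < T'" "T' < T" "1 \<le> T'" for T'
  proof -
    have "eps_close (\<epsilon> + dist (\<gamma> T') x) F T' (\<gamma>(T' := x))"
      using eps_close_restrict_fun_upd[OF close \<open>\<epsilon> > 0\<close>] T' \<open>F 0 = id\<close> by simp
    moreover have "\<epsilon> + dist (\<gamma> T') x \<le> 4 * \<epsilon>" using near[OF T'(1,2)] \<open>\<epsilon> > 0\<close> by simp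
    ultimately show ?thesis
      using T' \<open>\<gamma> 0 = x\<close> piecewise_continuous_on_restrict_fun_upd[OF pc, of T' x]
      unfolding eps_chain_def by (auto intro: eps_close_mono)
  qed
  then show ?thesis using \<open>b < T\<close> by (intro exI[of _ "T - b"]) auto
qed

end
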